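(* Let $f:G\to H$ be a surjective group homomorphism, and let $q_f:G\to G/\mathrm{Ker}(f)$ be the quotient map $g\mapsto g\,\mathrm{Ker}(f)$. (1) $\mathrm{sec}(f)\geq \sigma(f)$, and equality holds whenever $f$ does not admit a global section. (2) $\mathrm{sec}(f)=\mathrm{sec}(q_f)$. (3) If $f$ does not admit a global section, then $\mathrm{sec}(f)=\sigma(q_f)$.
   Context: For a homomorphism $f:G\to H$ and a subgroup $L\le H$, a local section of $f$ on $L$ is a homomorphism $s:L\to G$ with $f\circ s=\mathrm{incl}_L$ (the inclusion $L\hookrightarrow H$); a global section is a local section on $L=H$. The sectional number $\mathrm{sec}(f)$ is the least positive integer $m$ such that there exist proper subgroups $H_1,\ldots,H_m$ of $H$ with $H=H_1\cup\cdots\cup H_m$ and such that $f$ admits a local section on each $H_i$; $\mathrm{sec}(f)=\infty$ if no such $m$ exists. The covering number $\sigma(f)$ of a homomorphism $f:G\to H$ is the least positive integer $m$ such that there exist proper subgroups $G_1,\ldots,G_m$ of $G$ with $G=G_1\cup\cdots\cup G_m$ and, for each $i$, $\mathrm{Ker}(f)\subsetneq G_i$ and there is an isomorphism $\Omega_i:\mathrm{Ker}(f)\rtimes f(G_i)\to G_i$ (from some external semidirect product of $\mathrm{Ker}(f)$ by $f(G_i)$, with underlying set $\mathrm{Ker}(f)\times f(G_i)$) such that $f\circ\Omega_i=\pi_2$, the projection to the second coordinate; $\sigma(f)=\infty$ if no such $m$ exists. *)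

theory Defs
  imports "HOL-Algebra.Algebra" "HOL-Library.Extended_Nat"
begin

definition local_section ::
  "('a, 'c) monoid_scheme \<Rightarrow> ('b, 'd) monoid_scheme \<Rightarrow> ('a \<Rightarrow> 'b) \<Rightarrow> 'b set \<Rightarrow> ('b \<Rightarrow> 'a) \<Rightarrow> bool"
  where "local_section G H f L s \<longleftrightarrow>
           s \<in> hom (H\<lparr>carrier := L\<rparr>) G \<and> (\<forall>x\<in>L. f (s x) = x)"

definition has_local_section ::
  "('a, 'c) monoid_scheme \<Rightarrow> ('b, 'd) monoid_scheme \<Rightarrow> ('a \<Rightarrow> 'b) \<Rightarrow> 'b set \<Rightarrow> bool"
  where "has_local_section G H f L \<longleftrightarrow> (\<exists>s. local_section G H f L s)"

definition has_global_section ::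
  "('a, 'c) monoid_scheme \<Rightarrow> ('b, 'd) monoid_scheme \<Rightarrow> ('a \<Rightarrow> 'b) \<Rightarrow> bool"
  where "has_global_section G H f \<longleftrightarrow> has_local_section G H f (carrier H)"

definition proper_subgroup :: "'a set \<Rightarrow> ('a, 'c) monoid_scheme \<Rightarrow> bool"
  where "proper_subgroup L G \<longleftrightarrow> subgroup L G \<and> L \<noteq> carrier G"

text \<open>Sectional number; Inf of the empty set of enat is \<infinity>.\<close>
definition sec ::
  "('a, 'c) monoid_scheme \<Rightarrow> ('b, 'd) monoid_scheme \<Rightarrow> ('a \<Rightarrow> 'b) \<Rightarrow> enat"
  where "sec G H f = Inf {enat m | m. m > 0 \<and>
           (\<exists>Hs :: nat \<Rightarrow> 'b set.
              (\<forall>i<m. proper_subgroup (Hs i) H \<and> has_local_section G H f (Hs i)) \<and>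
              carrier H = (\<Union>i<m. Hs i))}"

definition semidirect_prod ::
  "('a, 'c) monoid_scheme \<Rightarrow> ('b, 'd) monoid_scheme \<Rightarrow> ('b \<Rightarrow> 'a \<Rightarrow> 'a) \<Rightarrow> ('a \<times> 'b) monoid"
  where "semidirect_prod K Q \<phi> =
    \<lparr>partial_object.carrier = carrier K \<times> carrier Q,
     monoid.mult = (\<lambda>(k1, q1) (k2, q2). (k1 \<otimes>\<^bsub>K\<^esub> \<phi> q1 k2, q1 \<otimes>\<^bsub>Q\<^esub> q2)),
     monoid.one = (\<one>\<^bsub>K\<^esub>, \<one>\<^bsub>Q\<^esub>)\<rparr>"

definition cov_number ::
  "('a, 'c) monoid_scheme \<Rightarrow> ('b, 'd) monoid_scheme \<Rightarrow> ('a \<Rightarrow> 'b) \<Rightarrow> enat"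
  where "cov_number G H f = Inf {enat m | m. m > 0 \<and>
           (\<exists>Gs :: nat \<Rightarrow> 'a set.
              (\<forall>i<m. proper_subgroup (Gs i) G \<and> kernel G H f \<subset> Gs i \<and>
                 (\<exists>\<phi> \<Omega>. \<phi> \<in> hom (H\<lparr>carrier := f ` Gs i\<rparr>) (AutoGroup (G\<lparr>carrier := kernel G H f\<rparr>)) \<and>
                    \<Omega> \<in> iso (semidirect_prod (G\<lparr>carrier := kernel G H f\<rparr>) (H\<lparr>carrier := f ` Gs i\<rparr>) \<phi>)
                            (G\<lparr>carrier := Gs i\<rparr>) \<and>
                    (\<forall>p \<in> kernel G H f \<times> f ` Gs i. f (\<Omega> p) = snd p))) \<and>
              carrier G = (\<Union>i<m. Gs i))}"

end

theory Submission
  imports Defs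
begin

text \<open>A local section \<open>s\<close> of \<open>f\<close> on a subgroup \<open>L\<close> turns the preimage \<open>f\<^sup>-\<^sup>1(L)\<close> into the
  semidirect product \<open>Ker f \<rtimes> L\<close>, with \<open>L\<close> acting on \<open>Ker f\<close> by conjugation through \<open>s\<close>, via
  \<open>(k, h) \<mapsto> k s(h)\<close>; conversely a splitting \<open>\<Omega>\<close> of a subgroup \<open>G\<^sub>i \<supseteq> Ker f\<close> restricts to the
  section \<open>h \<mapsto> \<Omega>(1, h)\<close> on \<open>f(G\<^sub>i)\<close>. Taking preimages and images therefore translates covers
  of \<open>H\<close> by proper subgroups carrying local sections into the covers of \<open>G\<close> counted by \<open>\<sigma>(f)\<close>
  and back, once trivial pieces (whose preimage is \<open>Ker f\<close> itself) are replaced by a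
  nontrivial one. Hence \<open>sec(f) = \<sigma>(f)\<close> for every surjective \<open>f\<close>, which gives (1) and, applied
  to \<open>q\<^sub>f\<close>, (3). For (2), \<open>f = \<theta> \<circ> q\<^sub>f\<close> for the isomorphism \<open>\<theta> : G/Ker f \<cong> H\<close>, and transporting
  subgroups and sections along \<open>\<theta>\<close> preserves the sectional number.\<close>

definition sectional_cover ::
  "('a, 'c) monoid_scheme \<Rightarrow> ('b, 'd) monoid_scheme \<Rightarrow> ('a \<Rightarrow> 'b) \<Rightarrow> nat \<Rightarrow> (nat \<Rightarrow> 'b set) \<Rightarrow> bool"
  where "sectional_cover G H f m Hs \<longleftrightarrow>
    (\<forall>i<m. proper_subgroup (Hs i) H \<and> has_local_section G H f (Hs i)) \<and>
    carrier H = (\<Union>i<m. Hs i)"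

definition splits_over_kernel ::
  "('a, 'c) monoid_scheme \<Rightarrow> ('b, 'd) monoid_scheme \<Rightarrow> ('a \<Rightarrow> 'b) \<Rightarrow> 'a set \<Rightarrow> bool"
  where "splits_over_kernel G H f Gi \<longleftrightarrow>
    (\<exists>\<phi> \<Omega>. \<phi> \<in> hom (H\<lparr>carrier := f ` Gi\<rparr>) (AutoGroup (G\<lparr>carrier := kernel G H f\<rparr>)) \<and>
       \<Omega> \<in> iso (semidirect_prod (G\<lparr>carrier := kernel G H f\<rparr>) (H\<lparr>carrier := f ` Gi\<rparr>) \<phi>)
               (G\<lparr>carrier := Gi\<rparr>) \<and>
       (\<forall>p \<in> kernel G H f \<times> f ` Gi. f (\<Omega> p) = snd p))"

definition splitting_cover ::
  "('a, 'c) monoid_scheme \<Rightarrow> ('b, 'd) monoid_scheme \<Rightarrow> ('a \<Rightarrow> 'b) \<Rightarrow> nat \<Rightarrow> (nat \<Rightarrow> 'a set) \<Rightarrow> bool"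
  where "splitting_cover G H f m Gs \<longleftrightarrow>
    (\<forall>i<m. proper_subgroup (Gs i) G \<and> kernel G H f \<subset> Gs i \<and> splits_over_kernel G H f (Gs i)) \<and>
    carrier G = (\<Union>i<m. Gs i)"

lemma sec_altdef: "sec G H f = Inf {enat m | m. 0 < m \<and> (\<exists>Hs. sectional_cover G H f m Hs)}"
  by (simp add: sec_def sectional_cover_def)

lemma cov_number_altdef:
  "cov_number G H f = Inf {enat m | m. 0 < m \<and> (\<exists>Gs. splitting_cover G H f m Gs)}"
  by (simp add: cov_number_def splitting_cover_def splits_over_kernel_def)

lemma (in group) m_inv_cancel_right:
  assumes "x \<in> carrier G" "y \<in> carrier G"
  shows "x \<otimes> inv y \<otimes> y = x" and "x \<otimes> y \<otimes> inv y = x"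
  using assms by (simp_all add: m_assoc)

lemma (in normal) conjugation_in_auto:
  assumes g: "g \<in> carrier G"
  shows "(\<lambda>k\<in>H. g \<otimes> k \<otimes> inv g) \<in> auto (G\<lparr>carrier := H\<rparr>)"
proof -
  have "(\<lambda>k\<in>H. g \<otimes> k \<otimes> inv g) \<in> hom (G\<lparr>carrier := H\<rparr>) (G\<lparr>carrier := H\<rparr>)"
    by (rule homI) (auto simp: g inv_op_closed2 m_assoc[symmetric] m_inv_cancel_right)
  moreover have "bij_betw (\<lambda>k\<in>H. g \<otimes> k \<otimes> inv g) H H"
    by (rule bij_betwI[where g = "\<lambda>k. inv g \<otimes> k \<otimes> g"])
      (auto simp: g inv_op_closed1 inv_op_closed2 m_assoc[symmetric] m_inv_cancel_right)
  ultimately show ?thesis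
    by (simp add: auto_def Bij_def)
qed

lemma (in normal) conjugation_hom_AutoGroup:
  "(\<lambda>g. \<lambda>k\<in>H. g \<otimes> k \<otimes> inv g) \<in> hom G (AutoGroup (G\<lparr>carrier := H\<rparr>))"
proof (rule homI)
  fix g assume "g \<in> carrier G"
  then show "(\<lambda>k\<in>H. g \<otimes> k \<otimes> inv g) \<in> carrier (AutoGroup (G\<lparr>carrier := H\<rparr>))"
    by (simp add: conjugation_in_auto AutoGroup_def)
next
  fix g1 g2 assume g: "g1 \<in> carrier G" "g2 \<in> carrier G"
  have "(\<lambda>k\<in>H. g1 \<otimes> g2 \<otimes> k \<otimes> inv (g1 \<otimes> g2))
        = compose H (\<lambda>k\<in>H. g1 \<otimes> k \<otimes> inv g1) (\<lambda>k\<in>H. g2 \<otimes> k \<otimes> inv g2)"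
    by (auto simp: compose_def g inv_op_closed2 m_assoc[symmetric] inv_mult_group)
  then show "(\<lambda>k\<in>H. g1 \<otimes> g2 \<otimes> k \<otimes> inv (g1 \<otimes> g2))
        = (\<lambda>k\<in>H. g1 \<otimes> k \<otimes> inv g1) \<otimes>\<^bsub>AutoGroup (G\<lparr>carrier := H\<rparr>)\<^esub> (\<lambda>k\<in>H. g2 \<otimes> k \<otimes> inv g2)"
    using conjugation_in_auto g by (simp add: AutoGroup_def BijGroup_def auto_def)
qed

lemma local_section_semidirect_iso:
  assumes G: "group G" and H: "group H" and f: "f \<in> hom G H"
    and s: "local_section G H f L s"
    and \<phi>: "\<And>h k. h \<in> L \<Longrightarrow> k \<in> kernel G H f \<Longrightarrow> \<phi> h k = s h \<otimes>\<^bsub>G\<^esub> k \<otimes>\<^bsub>G\<^esub> inv\<^bsub>G\<^esub> s h"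
  shows "(\<lambda>(k, h). k \<otimes>\<^bsub>G\<^esub> s h)
           \<in> iso (semidirect_prod (G\<lparr>carrier := kernel G H f\<rparr>) (H\<lparr>carrier := L\<rparr>) \<phi>)
                 (G\<lparr>carrier := {g \<in> carrier G. f g \<in> L}\<rparr>)"
    (is "?\<Omega> \<in> iso ?S _")
proof -
  interpret G: group G by (rule G)
  interpret f: group_hom G H f by (simp add: G H f group_hom_def group_hom_axioms_def)
  let ?K = "kernel G H f"
  have s_hom: "s \<in> hom (H\<lparr>carrier := L\<rparr>) G" and f_s: "\<And>h. h \<in> L \<Longrightarrow> f (s h) = h"
    using s by (auto simp: local_section_def)
  have s_carrier: "\<And>h. h \<in> L \<Longrightarrow> s h \<in> carrier G"
    using s_hom by (auto simp: hom_def)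
  have L_carrier: "\<And>h. h \<in> L \<Longrightarrow> h \<in> carrier H"
    by (metis f_s s_carrier f.hom_closed)
  have K_carrier: "\<And>k. k \<in> ?K \<Longrightarrow> k \<in> carrier G"
    by (simp add: kernel_def)
  have "?\<Omega> \<in> hom ?S (G\<lparr>carrier := {g \<in> carrier G. f g \<in> L}\<rparr>)"
  proof (rule homI)
    fix p assume "p \<in> carrier ?S"
    then show "?\<Omega> p \<in> carrier (G\<lparr>carrier := {g \<in> carrier G. f g \<in> L}\<rparr>)"
      by (auto simp: semidirect_prod_def kernel_def f_s L_carrier s_carrier)
  next
    fix p p' assume "p \<in> carrier ?S" "p' \<in> carrier ?S"
    then obtain k h k' h' where p: "p = (k, h)" "p' = (k', h')" "k \<in> ?K" "k' \<in> ?K" "h \<in> L" "h' \<in> L"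
      by (auto simp: semidirect_prod_def)
    have "s (h \<otimes>\<^bsub>H\<^esub> h') = s h \<otimes>\<^bsub>G\<^esub> s h'"
      using hom_mult[OF s_hom, of h h'] p by simp
    then show "?\<Omega> (p \<otimes>\<^bsub>?S\<^esub> p') = ?\<Omega> p \<otimes>\<^bsub>G\<lparr>carrier := {g \<in> carrier G. f g \<in> L}\<rparr>\<^esub> ?\<Omega> p'"
      using p by (simp add: semidirect_prod_def \<phi> K_carrier s_carrier G.m_assoc[symmetric] G.m_inv_cancel_right)
  qed
  moreover have "bij_betw ?\<Omega> (carrier ?S) {g \<in> carrier G. f g \<in> L}"
  proof (rule bij_betwI[where g = "\<lambda>g. (g \<otimes>\<^bsub>G\<^esub> inv\<^bsub>G\<^esub> s (f g), f g)"])
    show "?\<Omega> \<in> carrier ?S \<rightarrow> {g \<in> carrier G. f g \<in> L}"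
      by (auto simp: semidirect_prod_def kernel_def f_s L_carrier s_carrier)
    show "(\<lambda>g. (g \<otimes>\<^bsub>G\<^esub> inv\<^bsub>G\<^esub> s (f g), f g)) \<in> {g \<in> carrier G. f g \<in> L} \<rightarrow> carrier ?S"
      by (auto simp: semidirect_prod_def kernel_def s_carrier f_s)
    show "(?\<Omega> p \<otimes>\<^bsub>G\<^esub> inv\<^bsub>G\<^esub> s (f (?\<Omega> p)), f (?\<Omega> p)) = p" if "p \<in> carrier ?S" for p
      using that by (auto simp: semidirect_prod_def kernel_def f_s L_carrier s_carrier G.m_inv_cancel_right)
    show "?\<Omega> (g \<otimes>\<^bsub>G\<^esub> inv\<^bsub>G\<^esub> s (f g), f g) = g" if "g \<in> {g \<in> carrier G. f g \<in> L}" for g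
      using that by (simp add: s_carrier G.m_inv_cancel_right)
  qed
  ultimately show ?thesis
    by (simp add: iso_def)
qed

lemma local_section_preimage_splits:
  assumes G: "group G" and H: "group H" and f: "f \<in> hom G H"
    and s: "local_section G H f L s"
  shows "splits_over_kernel G H f {g \<in> carrier G. f g \<in> L}"
proof -
  interpret f: group_hom G H f by (simp add: G H f group_hom_def group_hom_axioms_def)
  let ?K = "kernel G H f"
  let ?\<phi> = "(\<lambda>g. \<lambda>k\<in>?K. g \<otimes>\<^bsub>G\<^esub> k \<otimes>\<^bsub>G\<^esub> inv\<^bsub>G\<^esub> g) \<circ> s"
  have s_hom: "s \<in> hom (H\<lparr>carrier := L\<rparr>) G" and f_s: "\<And>h. h \<in> L \<Longrightarrow> f (s h) = h"
    using s by (auto simp: local_section_def)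
  have s_carrier: "\<And>h. h \<in> L \<Longrightarrow> s h \<in> carrier G"
    using s_hom by (auto simp: hom_def)
  have image: "f ` {g \<in> carrier G. f g \<in> L} = L"
  proof
    show "L \<subseteq> f ` {g \<in> carrier G. f g \<in> L}"
      using f_s s_carrier by (metis (mono_tags, lifting) image_eqI mem_Collect_eq subsetI)
  qed auto
  have "?\<phi> \<in> hom (H\<lparr>carrier := L\<rparr>) (AutoGroup (G\<lparr>carrier := ?K\<rparr>))"
    by (rule hom_compose[OF s_hom normal.conjugation_hom_AutoGroup[OF f.normal_kernel]])
  moreover have "(\<lambda>(k, h). k \<otimes>\<^bsub>G\<^esub> s h)
      \<in> iso (semidirect_prod (G\<lparr>carrier := ?K\<rparr>) (H\<lparr>carrier := L\<rparr>) ?\<phi>) (G\<lparr>carrier := {g \<in> carrier G. f g \<in> L}\<rparr>)"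
    by (rule local_section_semidirect_iso[OF G H f s, of ?\<phi>]) (simp add: kernel_def)
  moreover have "\<forall>p \<in> ?K \<times> L. f ((\<lambda>(k, h). k \<otimes>\<^bsub>G\<^esub> s h) p) = snd p"
    using f.hom_closed[OF s_carrier] f_s by (auto simp: kernel_def s_carrier)
  ultimately show ?thesis
    unfolding splits_over_kernel_def image by blast
qed

lemma splits_over_kernel_local_section:
  assumes G: "group G" and H: "group H" and f: "f \<in> hom G H"
    and Gi: "subgroup Gi G" and split: "splits_over_kernel G H f Gi"
  shows "has_local_section G H f (f ` Gi)"
proof -
  interpret f: group_hom G H f by (simp add: G H f group_hom_def group_hom_axioms_def)
  let ?K = "kernel G H f"
  obtain \<phi> \<Omega> where
      \<phi>: "\<phi> \<in> hom (H\<lparr>carrier := f ` Gi\<rparr>) (AutoGroup (G\<lparr>carrier := ?K\<rparr>))"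
    and \<Omega>: "\<Omega> \<in> hom (semidirect_prod (G\<lparr>carrier := ?K\<rparr>) (H\<lparr>carrier := f ` Gi\<rparr>) \<phi>) (G\<lparr>carrier := Gi\<rparr>)"
    and f_\<Omega>: "\<forall>p \<in> ?K \<times> f ` Gi. f (\<Omega> p) = snd p"
    using split by (auto simp: splits_over_kernel_def iso_def)
  let ?S = "semidirect_prod (G\<lparr>carrier := ?K\<rparr>) (H\<lparr>carrier := f ` Gi\<rparr>) \<phi>"
  have K_group: "group (G\<lparr>carrier := ?K\<rparr>)"
    by (rule subgroup.subgroup_is_group[OF f.subgroup_kernel G])
  have \<phi>_one: "\<phi> h \<one>\<^bsub>G\<^esub> = \<one>\<^bsub>G\<^esub>" if "h \<in> f ` Gi" for h
  proof -
    have "\<phi> h \<in> hom (G\<lparr>carrier := ?K\<rparr>) (G\<lparr>carrier := ?K\<rparr>)"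
      using hom_in_carrier[OF \<phi>] that by (simp add: AutoGroup_def auto_def)
    then show ?thesis
      using hom_one[OF _ K_group K_group] by simp
  qed
  have one_in: "(\<one>\<^bsub>G\<^esub>, h) \<in> carrier ?S" if "h \<in> f ` Gi" for h
    using that by (simp add: semidirect_prod_def kernel_def)
  have "(\<lambda>h. \<Omega> (\<one>\<^bsub>G\<^esub>, h)) \<in> hom (H\<lparr>carrier := f ` Gi\<rparr>) G"
  proof (rule homI)
    fix h assume "h \<in> carrier (H\<lparr>carrier := f ` Gi\<rparr>)"
    then show "\<Omega> (\<one>\<^bsub>G\<^esub>, h) \<in> carrier G"
      using hom_in_carrier[OF \<Omega> one_in] subgroup.subset[OF Gi] by auto
  next
    fix x y assume "x \<in> carrier (H\<lparr>carrier := f ` Gi\<rparr>)" "y \<in> carrier (H\<lparr>carrier := f ` Gi\<rparr>)"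
    then have xy: "x \<in> f ` Gi" "y \<in> f ` Gi" by simp_all
    have "(\<one>\<^bsub>G\<^esub>, x) \<otimes>\<^bsub>?S\<^esub> (\<one>\<^bsub>G\<^esub>, y) = (\<one>\<^bsub>G\<^esub>, x \<otimes>\<^bsub>H\<^esub> y)"
      using \<phi>_one[OF xy(1)] by (simp add: semidirect_prod_def)
    then show "\<Omega> (\<one>\<^bsub>G\<^esub>, x \<otimes>\<^bsub>H\<lparr>carrier := f ` Gi\<rparr>\<^esub> y) = \<Omega> (\<one>\<^bsub>G\<^esub>, x) \<otimes>\<^bsub>G\<^esub> \<Omega> (\<one>\<^bsub>G\<^esub>, y)"
      using hom_mult[OF \<Omega> one_in[OF xy(1)] one_in[OF xy(2)]] by simp
  qed
  moreover have "\<forall>h \<in> f ` Gi. f (\<Omega> (\<one>\<^bsub>G\<^esub>, h)) = h"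
    using f_\<Omega> by (simp add: kernel_def)
  ultimately show ?thesis
    by (auto simp: has_local_section_def local_section_def)
qed

lemma (in group_hom) subgroup_vimage:
  assumes "subgroup L H"
  shows "subgroup {g \<in> carrier G. h g \<in> L} G"
  using assms
  by (intro G.subgroupI) (auto simp: subgroup.m_closed subgroup.m_inv_closed subgroup.one_closed)

lemma (in group_hom) vimage_image_subgroup:
  assumes S: "subgroup S G" and K: "kernel G H h \<subseteq> S"
  shows "{g \<in> carrier G. h g \<in> h ` S} = S"
proof
  show "S \<subseteq> {g \<in> carrier G. h g \<in> h ` S}"
    using subgroup.subset[OF S] by auto
next
  show "{g \<in> carrier G. h g \<in> h ` S} \<subseteq> S"
  proof
    fix g assume "g \<in> {g \<in> carrier G. h g \<in> h ` S}"
    then obtain x where g: "g \<in> carrier G" and x: "x \<in> S" and eq: "h g = h x"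
      by auto
    have x_carrier: "x \<in> carrier G"
      using subgroup.mem_carrier[OF S x] .
    have "g \<otimes> inv x \<in> kernel G H h"
      using g x_carrier eq by (simp add: kernel_def)
    then have "g \<otimes> inv x \<otimes> x \<in> S"
      using K subgroup.m_closed[OF S _ x] by blast
    then show "g \<in> S"
      using g x_carrier by (simp add: G.m_inv_cancel_right)
  qed
qed

lemma splitting_cover_imp_sectional_cover:
  assumes G: "group G" and H: "group H" and f: "f \<in> hom G H"
    and surj: "f ` carrier G = carrier H" and cover: "splitting_cover G H f m Gs"
  shows "sectional_cover G H f m (\<lambda>i. f ` Gs i)"
proof -
  interpret f: group_hom G H f by (simp add: G H f group_hom_def group_hom_axioms_def)
  have "proper_subgroup (f ` Gs i) H \<and> has_local_section G H f (f ` Gs i)" if i: "i < m" for i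
  proof -
    have Gi: "subgroup (Gs i) G" "Gs i \<noteq> carrier G" "kernel G H f \<subseteq> Gs i"
        "splits_over_kernel G H f (Gs i)"
      using cover i by (auto simp: splitting_cover_def proper_subgroup_def)
    have "f ` Gs i \<noteq> carrier H"
    proof
      assume "f ` Gs i = carrier H"
      then have "Gs i = {g \<in> carrier G. f g \<in> carrier H}"
        using f.vimage_image_subgroup[OF Gi(1,3)] by simp
      with Gi(2) f.hom_closed show False
        by blast
    qed
    moreover have "subgroup (f ` Gs i) H"
      by (rule f.subgroup_img_is_subgroup[OF Gi(1)])
    moreover have "has_local_section G H f (f ` Gs i)"
      by (rule splits_over_kernel_local_section[OF G H f Gi(1,4)])
    ultimately show ?thesis
      by (simp add: proper_subgroup_def)
  qed
  moreover have "carrier H = (\<Union>i<m. f ` Gs i)"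
    using cover surj unfolding splitting_cover_def by (metis image_UN)
  ultimately show ?thesis
    by (simp add: sectional_cover_def)
qed

lemma sectional_cover_imp_splitting_cover:
  assumes G: "group G" and H: "group H" and f: "f \<in> hom G H"
    and surj: "f ` carrier G = carrier H" and cover: "sectional_cover G H f m Hs"
    and nontrivial: "\<And>i. i < m \<Longrightarrow> Hs i \<noteq> {\<one>\<^bsub>H\<^esub>}"
  shows "splitting_cover G H f m (\<lambda>i. {g \<in> carrier G. f g \<in> Hs i})"
proof -
  interpret f: group_hom G H f by (simp add: G H f group_hom_def group_hom_axioms_def)
  have "proper_subgroup {g \<in> carrier G. f g \<in> Hs i} G \<and> kernel G H f \<subset> {g \<in> carrier G. f g \<in> Hs i}
        \<and> splits_over_kernel G H f {g \<in> carrier G. f g \<in> Hs i}" if i: "i < m" for i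
  proof -
    have L: "subgroup (Hs i) H" "Hs i \<noteq> carrier H" "has_local_section G H f (Hs i)"
      using cover i by (auto simp: sectional_cover_def proper_subgroup_def)
    have "{g \<in> carrier G. f g \<in> Hs i} \<noteq> carrier G"
    proof
      assume "{g \<in> carrier G. f g \<in> Hs i} = carrier G"
      then have "f ` carrier G \<subseteq> Hs i"
        by blast
      with surj L(2) subgroup.subset[OF L(1)] show False
        by blast
    qed
    moreover have "kernel G H f \<subset> {g \<in> carrier G. f g \<in> Hs i}"
    proof -
      obtain x where x: "x \<in> Hs i" "x \<noteq> \<one>\<^bsub>H\<^esub>"
        using nontrivial[OF i] subgroup.one_closed[OF L(1)] by blast
      moreover obtain g where "g \<in> carrier G" "f g = x"
        using x(1) subgroup.subset[OF L(1)] surj by (metis imageE subsetD)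
      ultimately show ?thesis
        using subgroup.one_closed[OF L(1)] by (auto simp: kernel_def)
    qed
    ultimately show ?thesis
      using f.subgroup_vimage[OF L(1)] L(3) local_section_preimage_splits[OF G H f]
      by (auto simp: proper_subgroup_def has_local_section_def)
  qed
  moreover have "carrier G = (\<Union>i<m. {g \<in> carrier G. f g \<in> Hs i})"
    using cover by (auto simp: sectional_cover_def)
  ultimately show ?thesis
    by (simp add: splitting_cover_def)
qed

lemma sectional_cover_nontrivial:
  assumes H: "group H" and cover: "sectional_cover G H f m Hs"
  obtains Hs' where "sectional_cover G H f m Hs'" and "\<And>i. i < m \<Longrightarrow> Hs' i \<noteq> {\<one>\<^bsub>H\<^esub>}"
proof -
  have pieces: "\<And>i. i < m \<Longrightarrow> proper_subgroup (Hs i) H \<and> has_local_section G H f (Hs i)"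
    and union: "carrier H = (\<Union>i<m. Hs i)"
    using cover by (auto simp: sectional_cover_def)
  have "\<exists>j<m. Hs j \<noteq> {\<one>\<^bsub>H\<^esub>}"
  proof (rule ccontr)
    assume "\<not> (\<exists>j<m. Hs j \<noteq> {\<one>\<^bsub>H\<^esub>})"
    moreover have "0 < m"
      using union monoid.one_closed[OF group.is_monoid[OF H]] by (auto simp: gr0I)
    ultimately have "Hs 0 = carrier H"
      using union by auto
    then show False
      using pieces[OF \<open>0 < m\<close>] by (simp add: proper_subgroup_def)
  qed
  then obtain j where j: "j < m" "Hs j \<noteq> {\<one>\<^bsub>H\<^esub>}"
    by blast
  let ?Hs' = "\<lambda>i. if Hs i = {\<one>\<^bsub>H\<^esub>} then Hs j else Hs i"
  have "\<one>\<^bsub>H\<^esub> \<in> Hs j"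
    using pieces[OF j(1)] by (simp add: proper_subgroup_def subgroup.one_closed)
  then have "carrier H = (\<Union>i<m. ?Hs' i)"
    using union j by (auto split: if_splits)
  then have "sectional_cover G H f m ?Hs'"
    using pieces j(1) by (simp add: sectional_cover_def)
  then show ?thesis
    using that j(2) by simp
qed

lemma sec_eq_cov_number:
  assumes G: "group G" and H: "group H" and f: "f \<in> hom G H"
    and surj: "f ` carrier G = carrier H"
  shows "sec G H f = cov_number G H f"
proof -
  have "(\<exists>Hs. sectional_cover G H f m Hs) \<longleftrightarrow> (\<exists>Gs. splitting_cover G H f m Gs)" for m
  proof
    assume "\<exists>Hs. sectional_cover G H f m Hs"
    then obtain Hs where "sectional_cover G H f m Hs" "\<And>i. i < m \<Longrightarrow> Hs i \<noteq> {\<one>\<^bsub>H\<^esub>}"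
      using sectional_cover_nontrivial[OF H] by metis
    then show "\<exists>Gs. splitting_cover G H f m Gs"
      using sectional_cover_imp_splitting_cover[OF G H f surj] by blast
  next
    assume "\<exists>Gs. splitting_cover G H f m Gs"
    then show "\<exists>Hs. sectional_cover G H f m Hs"
      using splitting_cover_imp_sectional_cover[OF G H f surj] by blast
  qed
  then show ?thesis
    by (simp add: sec_altdef cov_number_altdef)
qed

lemma sectional_cover_iso_image:
  assumes HA: "group HA" and HB: "group HB" and \<theta>: "\<theta> \<in> iso HA HB"
    and factor: "\<And>g. g \<in> carrier G \<Longrightarrow> fB g = \<theta> (fA g)"
    and cover: "sectional_cover G HA fA m Hs"
  shows "sectional_cover G HB fB m (\<lambda>i. \<theta> ` Hs i)"
proof -
  interpret \<theta>: group_hom HA HB \<theta>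
    using HA HB \<theta> by (simp add: group_hom_def group_hom_axioms_def iso_imp_homomorphism)
  let ?\<psi> = "inv_into (carrier HA) \<theta>"
  have \<psi>: "?\<psi> \<in> hom HB HA"
    using group.iso_set_sym[OF HA \<theta>] by (simp add: iso_def)
  have \<theta>_inj: "inj_on \<theta> (carrier HA)" and \<theta>_surj: "\<theta> ` carrier HA = carrier HB"
    using \<theta> by (auto simp: iso_iff)
  have piece: "proper_subgroup (\<theta> ` L) HB \<and> has_local_section G HB fB (\<theta> ` L)"
    if L_proper: "proper_subgroup L HA" and L_section: "has_local_section G HA fA L" for L
  proof -
    have L: "subgroup L HA" "L \<noteq> carrier HA"
      using L_proper by (auto simp: proper_subgroup_def)
    have L_carrier: "L \<subseteq> carrier HA"
      using subgroup.subset[OF L(1)] .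
    obtain s where s: "s \<in> hom (HA\<lparr>carrier := L\<rparr>) G" "\<And>x. x \<in> L \<Longrightarrow> fA (s x) = x"
      using L_section by (auto simp: has_local_section_def local_section_def)
    have \<psi>_\<theta>: "?\<psi> (\<theta> x) = x" if "x \<in> L" for x
      using that L_carrier \<theta>_inj by (simp add: inv_into_f_f subsetD)
    have "?\<psi> \<in> hom (HB\<lparr>carrier := \<theta> ` L\<rparr>) (HA\<lparr>carrier := L\<rparr>)"
    proof (rule homI)
      fix y assume "y \<in> carrier (HB\<lparr>carrier := \<theta> ` L\<rparr>)"
      then show "?\<psi> y \<in> carrier (HA\<lparr>carrier := L\<rparr>)"
        using \<psi>_\<theta> by auto
    next
      fix y z assume "y \<in> carrier (HB\<lparr>carrier := \<theta> ` L\<rparr>)" "z \<in> carrier (HB\<lparr>carrier := \<theta> ` L\<rparr>)"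
      then show "?\<psi> (y \<otimes>\<^bsub>HB\<lparr>carrier := \<theta> ` L\<rparr>\<^esub> z) = ?\<psi> y \<otimes>\<^bsub>HA\<lparr>carrier := L\<rparr>\<^esub> ?\<psi> z"
        using hom_mult[OF \<psi>] L_carrier \<theta>.hom_closed by (auto simp: subsetD)
    qed
    then have "s \<circ> ?\<psi> \<in> hom (HB\<lparr>carrier := \<theta> ` L\<rparr>) G"
      using hom_compose s(1) by blast
    moreover have "\<forall>y \<in> \<theta> ` L. fB ((s \<circ> ?\<psi>) y) = y"
      using factor hom_in_carrier[OF s(1)] s(2) \<psi>_\<theta> by auto
    moreover have "\<theta> ` L \<noteq> carrier HB"
      using L(2) L_carrier \<theta>_surj inj_on_image_eq_iff[OF \<theta>_inj] by blast
    ultimately show ?thesis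
      using \<theta>.subgroup_img_is_subgroup[OF L(1)]
      by (auto simp: proper_subgroup_def has_local_section_def local_section_def)
  qed
  show ?thesis
    using cover piece \<theta>_surj by (auto simp: sectional_cover_def simp flip: image_UN)
qed

lemma sec_comp_iso:
  assumes HA: "group HA" and HB: "group HB" and \<theta>: "\<theta> \<in> iso HA HB" and fA: "fA \<in> hom G HA"
    and factor: "\<And>g. g \<in> carrier G \<Longrightarrow> fB g = \<theta> (fA g)"
  shows "sec G HB fB = sec G HA fA"
proof -
  let ?\<psi> = "inv_into (carrier HA) \<theta>"
  have \<psi>: "?\<psi> \<in> iso HB HA"
    by (rule group.iso_set_sym[OF HA \<theta>])
  have factor': "fA g = ?\<psi> (fB g)" if "g \<in> carrier G" for g
    using that factor hom_in_carrier[OF fA] \<theta> by (simp add: iso_iff)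
  have "(\<exists>Hs. sectional_cover G HA fA m Hs) \<longleftrightarrow> (\<exists>Hs. sectional_cover G HB fB m Hs)" for m
    using sectional_cover_iso_image[where G = G and fA = fA and fB = fB, OF HA HB \<theta> factor]
      sectional_cover_iso_image[where G = G and fA = fB and fB = fA, OF HB HA \<psi> factor']
    by blast
  then show ?thesis
    by (simp add: sec_altdef)
qed

lemma (in normal) l_coset_hom_Mod: "(\<lambda>a. a <# H) \<in> hom G (G Mod H)"
  using r_coset_hom_Mod by (rule hom_eq) (simp add: coset_eq)

lemma (in normal) l_coset_Mod_surj: "(\<lambda>a. a <# H) ` carrier G = carrier (G Mod H)"
  by (auto simp: FactGroup_def RCOSETS_def coset_eq)

lemma (in group_hom) the_elem_image_l_coset_kernel:
  assumes "g \<in> carrier G"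
  shows "the_elem (h ` (g <# kernel G H h)) = h g"
proof -
  have "g \<in> g <# kernel G H h"
    using assms G.r_one[OF assms] unfolding l_coset_def kernel_def by force
  moreover have "h ` (g <# kernel G H h) \<subseteq> {h g}"
    using assms by (auto simp: l_coset_def kernel_def)
  ultimately have "h ` (g <# kernel G H h) = {h g}"
    by blast
  then show ?thesis
    by simp
qed

theorem theorem2p11:
  fixes G :: "('a, 'c) monoid_scheme" and H :: "('b, 'd) monoid_scheme" and f :: "'a \<Rightarrow> 'b"
  assumes "group G" and "group H" and "f \<in> hom G H" and "f ` carrier G = carrier H"
  defines "q \<equiv> (\<lambda>g. g <#\<^bsub>G\<^esub> kernel G H f)"
  shows "(cov_number G H f \<le> sec G H f
          \<and> (\<not> has_global_section G H f \<longrightarrow> sec G H f = cov_number G H f))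
         \<and> sec G H f = sec G (G Mod kernel G H f) q
         \<and> (\<not> has_global_section G H f \<longrightarrow> sec G H f = cov_number G (G Mod kernel G H f) q)"
proof -
  interpret f: group_hom G H f
    using assms(1-3) by (simp add: group_hom_def group_hom_axioms_def)
  let ?K = "kernel G H f"
  have K: "?K \<lhd> G"
    by (rule f.normal_kernel)
  have Mod: "group (G Mod ?K)"
    by (rule normal.factorgroup_is_group[OF K])
  have q_hom: "q \<in> hom G (G Mod ?K)" and q_surj: "q ` carrier G = carrier (G Mod ?K)"
    unfolding q_def by (rule normal.l_coset_hom_Mod[OF K], rule normal.l_coset_Mod_surj[OF K])
  have "sec G H f = cov_number G H f"
    by (rule sec_eq_cov_number[OF assms(1-4)])
  moreover have "sec G (G Mod ?K) q = cov_number G (G Mod ?K) q"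
    by (rule sec_eq_cov_number[OF assms(1) Mod q_hom q_surj])
  moreover have "sec G H f = sec G (G Mod ?K) q"
    by (rule sec_comp_iso[OF Mod assms(2) f.FactGroup_iso_set[OF assms(4)] q_hom])
      (simp add: q_def f.the_elem_image_l_coset_kernel)
  ultimately show ?thesis
    by simp
qed

end
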